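(* Let $f:\mathbb{N}\to\mathbb{R}$ satisfy $f\in\Omega(\ell)$, i.e., there are $\gamma>0$ and $\ell_0$ with $f(\ell)\ge\gamma\ell$ for all $\ell\ge\ell_0$. Then there is a constant $\delta>0$ (depending only on $f$) such that for every instance $(A,C,k)$ and every committee $W$ that is affordable and $f$-representative, every AV-completion of $W$ has utilitarian ratio at least $\delta/\sqrt{k}$.
   Context: An instance $(A,C,k)$ consists of a finite nonempty candidate set $C$, voters $N=\{1,\dots,n\}$, approval sets $A_i\subseteq C$, and a committee size $1\le k\le |C|$. $N_c=\{i: c\in A_i\}$. A committee is $W\subseteq C$ with $|W|\le k$. $\mathrm{sw}(W)=\sum_i|A_i\cap W|$; the utilitarian ratio of $W$ is $\mathrm{sw}(W)/\max\{\mathrm{sw}(W'):|W'|=k\}$. An AV-completion of $W$ is $W\cup T$ where $T\subseteq C\setminus W$, $|T|=k-|W|$, and $T$ maximizes $\sum_{c\in T}|N_c|$ among such sets. $W$ is affordable if there are $p_i:C\to\mathbb{R}_{\ge0}$ with $p_i(c)=0$ for $c\notin A_i$, $\sum_c p_i(c)\le k/n$, $\sum_i p_i(c)=1$ for $c\in W$, $\sum_i p_i(c)=0$ for $c\notin W$. $W$ is $f$-representative if for every $c\notin W$, every $\ell\in\{1,\dots,k\}$ and every $N'\subseteq N_c$ with $|N'|\ge \ell n/k$, $\frac{1}{|N'|}\sum_{i\in N'}|A_i\cap W|\ge f(\ell)$. *)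

theory Defs
  imports Complex_Main
begin

text \<open>Candidates and voters are natural numbers; voters are N = {1..n}.
  A voter profile is A :: nat => nat set (A i is the approval set of voter i).\<close>

definition voters :: "nat \<Rightarrow> nat set" where
  "voters n = {1..n}"

definition valid_instance :: "nat set \<Rightarrow> (nat \<Rightarrow> nat set) \<Rightarrow> nat \<Rightarrow> nat \<Rightarrow> bool" where
  "valid_instance C A n k \<longleftrightarrow> finite C \<and> C \<noteq> {} \<and> 1 \<le> n
     \<and> (\<forall>i\<in>voters n. A i \<subseteq> C) \<and> 1 \<le> k \<and> k \<le> card C"

definition supporters :: "(nat \<Rightarrow> nat set) \<Rightarrow> nat \<Rightarrow> nat \<Rightarrow> nat set" where
  "supporters A n c = {i \<in> voters n. c \<in> A i}"

definition committee :: "nat set \<Rightarrow> nat \<Rightarrow> nat set \<Rightarrow> bool" where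
  "committee C k W \<longleftrightarrow> W \<subseteq> C \<and> card W \<le> k"

definition sw :: "(nat \<Rightarrow> nat set) \<Rightarrow> nat \<Rightarrow> nat set \<Rightarrow> nat" where
  "sw A n W = (\<Sum>i\<in>voters n. card (A i \<inter> W))"

definition opt_sw :: "nat set \<Rightarrow> (nat \<Rightarrow> nat set) \<Rightarrow> nat \<Rightarrow> nat \<Rightarrow> nat" where
  "opt_sw C A n k = Max {sw A n W' | W'. W' \<subseteq> C \<and> card W' = k}"

definition util_ratio :: "nat set \<Rightarrow> (nat \<Rightarrow> nat set) \<Rightarrow> nat \<Rightarrow> nat \<Rightarrow> nat set \<Rightarrow> real" where
  "util_ratio C A n k W =
     (if opt_sw C A n k = 0 then 1 else real (sw A n W) / real (opt_sw C A n k))"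

definition AV_completion ::
  "nat set \<Rightarrow> (nat \<Rightarrow> nat set) \<Rightarrow> nat \<Rightarrow> nat \<Rightarrow> nat set \<Rightarrow> nat set \<Rightarrow> bool" where
  "AV_completion C A n k W W' \<longleftrightarrow>
     (\<exists>T. T \<subseteq> C - W \<and> card T = k - card W \<and>
        (\<forall>T'. T' \<subseteq> C - W \<and> card T' = k - card W \<longrightarrow>
           (\<Sum>c\<in>T'. card (supporters A n c)) \<le> (\<Sum>c\<in>T. card (supporters A n c)))
        \<and> W' = W \<union> T)"

definition affordable :: "nat set \<Rightarrow> (nat \<Rightarrow> nat set) \<Rightarrow> nat \<Rightarrow> nat \<Rightarrow> nat set \<Rightarrow> bool" where
  "affordable C A n k W \<longleftrightarrow>
     (\<exists>p :: nat \<Rightarrow> nat \<Rightarrow> real.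
        (\<forall>i\<in>voters n. \<forall>c\<in>C. p i c \<ge> 0)
      \<and> (\<forall>i\<in>voters n. \<forall>c\<in>C. c \<notin> A i \<longrightarrow> p i c = 0)
      \<and> (\<forall>i\<in>voters n. (\<Sum>c\<in>C. p i c) \<le> real k / real n)
      \<and> (\<forall>c\<in>W. (\<Sum>i\<in>voters n. p i c) = 1)
      \<and> (\<forall>c\<in>C - W. (\<Sum>i\<in>voters n. p i c) = 0))"

definition f_representative ::
  "(nat \<Rightarrow> real) \<Rightarrow> nat set \<Rightarrow> (nat \<Rightarrow> nat set) \<Rightarrow> nat \<Rightarrow> nat \<Rightarrow> nat set \<Rightarrow> bool" where
  "f_representative f C A n k W \<longleftrightarrow>
     (\<forall>c\<in>C - W. \<forall>l\<in>{1..k}. \<forall>N'. N' \<subseteq> supporters A n c \<and>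
        real (card N') \<ge> real l * real n / real k \<longrightarrow>
        (\<Sum>i\<in>N'. real (card (A i \<inter> W))) / real (card N') \<ge> f l)"

end

theory Submission
  imports Defs
begin

(* Write s_c = |N_c| and S = sw(W). Affordability forces s_c >= n/k for c in W, so S >= |W| n/k,
   and hence |W| s_c <= S x for x = s_c k/n. For c outside W with x large, f-representativeness
   applied to all of N_c with l = floor x gives S >= s_c f(l) >= s_c gamma x / 2, so also
   |W| s_c x <= (2k/gamma) S. Multiplying the two bounds, |W| s_c <= sqrt(2k/gamma) S.
   An optimal committee beats the greedy AV-completion W' by at most |W| candidates outside W,
   each worth O(sqrt k) S / |W|, so opt <= sw(W') + O(sqrt k) sw(W'). *)

lemma sum_le_of_card_le:
  fixes s :: "'a \<Rightarrow> real"
  assumes "finite E" "card E \<le> w" "\<And>c. c \<in> E \<Longrightarrow> real w * s c \<le> B" "0 \<le> B"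
  shows "sum s E \<le> B"
proof (cases "w = 0")
  case True
  then show ?thesis
    using assms(1,2,4) by simp
next
  case False
  have "real w * sum s E = (\<Sum>c\<in>E. real w * s c)"
    by (simp add: sum_distrib_left)
  also have "\<dots> \<le> real (card E) * B"
    using assms(3) sum_mono[of E "\<lambda>c. real w * s c" "\<lambda>_. B"] by simp
  also have "\<dots> \<le> real w * B"
    using assms(2,4) by (simp add: mult_right_mono)
  finally show ?thesis
    using False by simp
qed

lemma sum_le_max_sum_add:
  fixes s :: "'a \<Rightarrow> real"
  assumes "finite X" "T \<subseteq> X" "card T = m"
    and T_max: "\<And>T'. T' \<subseteq> X \<Longrightarrow> card T' = m \<Longrightarrow> sum s T' \<le> sum s T"
    and "R \<subseteq> X" "card R \<le> m + w"
    and nonneg: "\<And>c. c \<in> X \<Longrightarrow> 0 \<le> s c"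
    and bound: "\<And>c. c \<in> X \<Longrightarrow> real w * s c \<le> B" "0 \<le> B"
  shows "sum s R \<le> sum s T + B"
proof -
  have fin_R: "finite R"
    using assms(1,5) finite_subset by blast
  have "m \<le> card X"
    using assms(1-3) card_mono by blast
  obtain T' where T': "T' \<subseteq> X" "card T' = m" "card (R - T') \<le> w"
  proof (cases "card R \<le> m")
    case True
    then obtain T' where "R \<subseteq> T'" "T' \<subseteq> X" "card T' = m"
      using exists_subset_between[OF _ \<open>m \<le> card X\<close> \<open>R \<subseteq> X\<close> \<open>finite X\<close>] by blast
    moreover from \<open>R \<subseteq> T'\<close> have "R - T' = {}"
      by blast
    ultimately show ?thesis
      by (metis that card.empty zero_le)
  next
    case False
    then obtain T' where "T' \<subseteq> R" "card T' = m"
      using obtain_subset_with_card_n[of m R] by auto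
    moreover have "card (R - T') = card R - m"
      using calculation fin_R by (simp add: card_Diff_subset finite_subset)
    ultimately show ?thesis
      using \<open>R \<subseteq> X\<close> \<open>card R \<le> m + w\<close> by (intro that) auto
  qed
  have "sum s R = sum s (R \<inter> T') + sum s (R - T')"
    using fin_R by (simp add: sum.Int_Diff)
  also have "sum s (R \<inter> T') \<le> sum s T'"
    using T'(1) assms(1) nonneg by (intro sum_mono2) (auto intro: finite_subset)
  also have "sum s (R - T') \<le> B"
    using T'(3) assms(5) fin_R bound by (intro sum_le_of_card_le) auto
  also have "sum s T' \<le> sum s T"
    using T' T_max by blast
  finally show ?thesis
    by simp
qed

lemma le_sqrt_mult_of_two_bounds:
  fixes u S x c :: real
  assumes "0 \<le> u" "0 \<le> S" "u \<le> S * x" "u * x \<le> c * S"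
  shows "u \<le> sqrt c * S"
proof -
  have "u\<^sup>2 \<le> u * (S * x)"
    using assms(1,3) by (simp add: power2_eq_square mult_left_mono)
  also have "\<dots> = S * (u * x)"
    by (simp only: ac_simps)
  also have "\<dots> \<le> S * (c * S)"
    using assms(2,4) by (rule mult_left_mono[rotated])
  also have "\<dots> = c * S\<^sup>2"
    by (simp add: power2_eq_square)
  finally have "u \<le> sqrt (c * S\<^sup>2)"
    by (rule real_le_rsqrt)
  then show ?thesis
    using assms(2) by (simp add: real_sqrt_mult)
qed

lemma finite_voters [simp]: "finite (voters n)"
  by (simp add: voters_def)

lemma card_voters [simp]: "card (voters n) = n"
  by (simp add: voters_def)

lemma supporters_subset_voters: "supporters A n c \<subseteq> voters n"
  by (auto simp: supporters_def)

lemma card_supporters_le: "card (supporters A n c) \<le> n"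
  using card_mono[OF finite_voters supporters_subset_voters] by simp

lemma sw_eq_sum_card_supporters:
  assumes "finite S"
  shows "sw A n S = (\<Sum>c\<in>S. card (supporters A n c))"
proof -
  have "sw A n S = (\<Sum>i\<in>voters n. \<Sum>c\<in>S. if c \<in> A i then 1 else 0)"
    unfolding sw_def using assms by (intro sum.cong) (simp_all add: sum.If_cases Int_commute)
  also have "\<dots> = (\<Sum>c\<in>S. \<Sum>i\<in>voters n. if c \<in> A i then 1 else 0)"
    by (rule sum.swap)
  also have "\<dots> = (\<Sum>c\<in>S. card (supporters A n c))"
    by (simp add: sum.If_cases supporters_def Int_def)
  finally show ?thesis .
qed

lemma sw_mono:
  assumes "finite S" "W \<subseteq> S"
  shows "sw A n W \<le> sw A n S"
  unfolding sw_def using assms by (intro sum_mono card_mono) auto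

lemma opt_sw_attained:
  assumes "valid_instance C A n k"
  obtains Q where "Q \<subseteq> C" "card Q = k" "opt_sw C A n k = sw A n Q"
proof -
  let ?Qs = "{Q. Q \<subseteq> C \<and> card Q = k}"
  have "finite C" "k \<le> card C"
    using assms by (auto simp: valid_instance_def)
  have "?Qs \<subseteq> Pow C"
    by blast
  then have "finite ?Qs"
    by (rule finite_subset) (simp add: \<open>finite C\<close>)
  obtain Q where "Q \<subseteq> C" "card Q = k"
    using obtain_subset_with_card_n[OF \<open>k \<le> card C\<close>] by metis
  then have "?Qs \<noteq> {}"
    by blast
  have "opt_sw C A n k = Max (sw A n ` ?Qs)"
    unfolding opt_sw_def by (rule arg_cong[of _ _ Max]) blast
  also have "\<dots> \<in> sw A n ` ?Qs"
    using \<open>finite ?Qs\<close> \<open>?Qs \<noteq> {}\<close> by (intro Max_in) simp_all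
  finally have "opt_sw C A n k \<in> sw A n ` ?Qs" .
  then show ?thesis
    using that by blast
qed

lemma affordable_card_supporters_ge:
  assumes "finite C" "W \<subseteq> C" "affordable C A n k W" "c \<in> W"
  shows "real n \<le> real k * real (card (supporters A n c))"
proof -
  obtain p :: "nat \<Rightarrow> nat \<Rightarrow> real" where
    p_nonneg: "\<forall>i\<in>voters n. \<forall>c\<in>C. p i c \<ge> 0" and
    p_approved: "\<forall>i\<in>voters n. \<forall>c\<in>C. c \<notin> A i \<longrightarrow> p i c = 0" and
    p_budget: "\<forall>i\<in>voters n. (\<Sum>c\<in>C. p i c) \<le> real k / real n" and
    p_paid: "\<forall>c\<in>W. (\<Sum>i\<in>voters n. p i c) = 1"
    using assms(3) unfolding affordable_def by blast
  have "c \<in> C"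
    using assms(2,4) by blast
  let ?N = "supporters A n c"
  have "1 = (\<Sum>i\<in>voters n. p i c)"
    using p_paid assms(4) by simp
  also have "\<dots> = (\<Sum>i\<in>?N. p i c)"
    using p_approved \<open>c \<in> C\<close>
    by (intro sum.mono_neutral_right supporters_subset_voters) (auto simp: supporters_def)
  also have "\<dots> \<le> (\<Sum>i\<in>?N. real k / real n)"
  proof (intro sum_mono)
    fix i
    assume "i \<in> ?N"
    then have i: "i \<in> voters n"
      using supporters_subset_voters by blast
    have "p i c \<le> (\<Sum>c\<in>C. p i c)"
      using p_nonneg i \<open>c \<in> C\<close> \<open>finite C\<close> by (intro member_le_sum) auto
    then show "p i c \<le> real k / real n"
      using p_budget i by force
  qed
  finally have "1 \<le> real (card ?N) * real k / real n"
    by simp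
  then show ?thesis
    by (cases "n = 0") (simp_all add: field_simps)
qed

lemma affordable_sw_ge:
  assumes "finite C" "W \<subseteq> C" "affordable C A n k W"
  shows "real (card W) * real n \<le> real k * real (sw A n W)"
proof -
  have "finite W"
    using assms(1,2) finite_subset by blast
  have "real (card W) * real n = (\<Sum>c\<in>W. real n)"
    by simp
  also have "\<dots> \<le> (\<Sum>c\<in>W. real k * real (card (supporters A n c)))"
    using affordable_card_supporters_ge[OF assms] by (intro sum_mono)
  also have "\<dots> = real k * real (sw A n W)"
    using sw_eq_sum_card_supporters[OF \<open>finite W\<close>] by (simp add: sum_distrib_left)
  finally show ?thesis .
qed

lemma f_representative_sw_ge:
  assumes "f_representative f C A n k W" "c \<in> C - W" "l \<in> {1..k}"
    and "real l * real n / real k \<le> real (card (supporters A n c))"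
  shows "real (card (supporters A n c)) * f l \<le> real (sw A n W)"
proof -
  let ?N = "supporters A n c"
  have "f l \<le> (\<Sum>i\<in>?N. real (card (A i \<inter> W))) / real (card ?N)"
    using assms unfolding f_representative_def by blast
  moreover have "(\<Sum>i\<in>?N. real (card (A i \<inter> W))) \<le> real (sw A n W)"
    unfolding sw_def of_nat_sum by (intro sum_mono2 supporters_subset_voters) auto
  ultimately show ?thesis
    by (cases "card ?N = 0") (simp_all add: field_simps)
qed

lemma f_representative_growth_sw_ge:
  assumes valid: "valid_instance C A n k" and rep: "f_representative f C A n k W"
    and "0 < \<gamma>" "1 \<le> L" and growth: "\<forall>l\<ge>L. \<gamma> * real l \<le> f l" and "c \<in> C - W"
    and x: "x = real (card (supporters A n c)) * real k / real n" "real L \<le> x"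
  shows "\<gamma> * (real (card (supporters A n c)) * x) \<le> 2 * real (sw A n W)"
proof -
  define s where "s = real (card (supporters A n c))"
  define l where "l = nat \<lfloor>x\<rfloor>"
  have "1 \<le> n" "1 \<le> k"
    using valid by (auto simp: valid_instance_def)
  have "x \<le> real n * real k / real n"
    unfolding x s_def using card_supporters_le[of A n c]
    by (intro divide_right_mono mult_right_mono) auto
  then have "x \<le> real k"
    using \<open>1 \<le> n\<close> by simp
  have "real l \<le> x" "x < real l + 1" "L \<le> l"
    using x(2) \<open>1 \<le> L\<close> by (simp_all add: l_def le_nat_floor)
  then have "l \<in> {1..k}" "x \<le> 2 * real l"
    using \<open>1 \<le> L\<close> \<open>x \<le> real k\<close> by auto
  have "real l * real n / real k \<le> s"
    using \<open>real l \<le> x\<close> \<open>1 \<le> n\<close> \<open>1 \<le> k\<close> by (simp add: x s_def field_simps)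
  then have "s * f l \<le> real (sw A n W)"
    using f_representative_sw_ge[OF rep \<open>c \<in> C - W\<close> \<open>l \<in> {1..k}\<close>] by (simp add: s_def)
  have "\<gamma> * x \<le> \<gamma> * (2 * real l)"
    using \<open>x \<le> 2 * real l\<close> \<open>0 < \<gamma>\<close> by simp
  also have "\<dots> \<le> 2 * f l"
    using growth \<open>L \<le> l\<close> by simp
  finally have "s * (\<gamma> * x) \<le> s * (2 * f l)"
    by (rule mult_left_mono) (simp add: s_def)
  with \<open>s * f l \<le> real (sw A n W)\<close> show ?thesis
    by (simp add: s_def mult_ac)
qed

lemma card_mul_card_supporters_le:
  assumes valid: "valid_instance C A n k" and "committee C k W" "affordable C A n k W"
    and rep: "f_representative f C A n k W"
    and "0 < \<gamma>" "1 \<le> L" and growth: "\<forall>l\<ge>L. \<gamma> * real l \<le> f l" and "c \<in> C - W"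
  shows "real (card W) * real (card (supporters A n c))
           \<le> (real L + sqrt (2 / \<gamma>)) * sqrt (real k) * real (sw A n W)"
proof -
  define w where "w = real (card W)"
  define s where "s = real (card (supporters A n c))"
  define S where "S = real (sw A n W)"
  define x where "x = s * real k / real n"
  have "1 \<le> n" "finite C" "card W \<le> k" "W \<subseteq> C"
    using valid \<open>committee C k W\<close> by (auto simp: valid_instance_def committee_def)
  have "0 \<le> s" "0 \<le> S" "0 \<le> w" "w \<le> real k" "1 \<le> sqrt (real k)" "0 \<le> x"
    using \<open>card W \<le> k\<close> valid by (simp_all add: s_def S_def w_def x_def valid_instance_def)
  have "w * real n \<le> real k * S"
    using affordable_sw_ge[OF \<open>finite C\<close> \<open>W \<subseteq> C\<close> \<open>affordable C A n k W\<close>] by (simp add: w_def S_def)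
  then have "(w * real n) * s \<le> (real k * S) * s"
    using \<open>0 \<le> s\<close> by (rule mult_right_mono)
  then have ws_le: "w * s \<le> S * x"
    using \<open>1 \<le> n\<close> by (simp add: x_def field_simps mult_ac)
  show ?thesis
  proof (cases "x < real L")
    case True
    have "w * s \<le> S * real L"
      using ws_le mult_left_mono[of x "real L" S] True \<open>0 \<le> S\<close> by linarith
    also have "\<dots> \<le> S * ((real L + sqrt (2 / \<gamma>)) * sqrt (real k))"
      using mult_mono[of "real L" "real L + sqrt (2 / \<gamma>)" 1 "sqrt (real k)"]
        \<open>1 \<le> sqrt (real k)\<close> \<open>0 < \<gamma>\<close> \<open>0 \<le> S\<close> by (simp add: mult_left_mono)
    finally show ?thesis
      by (simp add: w_def s_def S_def mult_ac)
  next
    case False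
    have "(w * s) * x \<le> real k * (s * x)"
      using \<open>w \<le> real k\<close> \<open>0 \<le> s\<close> \<open>0 \<le> x\<close> by (simp add: mult.assoc mult_right_mono)
    also have "\<gamma> * (s * x) \<le> 2 * S"
      using f_representative_growth_sw_ge[OF valid rep \<open>0 < \<gamma>\<close> \<open>1 \<le> L\<close> growth \<open>c \<in> C - W\<close>] False
      by (simp add: s_def S_def x_def)
    then have "real k * (\<gamma> * (s * x)) \<le> real k * (2 * S)"
      by (rule mult_left_mono) simp
    then have "real k * (s * x) \<le> (2 * real k / \<gamma>) * S"
      using \<open>0 < \<gamma>\<close> by (simp add: field_simps mult_ac)
    finally have "w * s \<le> sqrt (2 * real k / \<gamma>) * S"
      using \<open>0 \<le> w\<close> \<open>0 \<le> s\<close> \<open>0 \<le> S\<close> ws_le by (intro le_sqrt_mult_of_two_bounds) auto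
    also have "\<dots> = sqrt (2 / \<gamma>) * sqrt (real k) * S"
      by (simp add: real_sqrt_mult real_sqrt_divide)
    also have "\<dots> \<le> (real L + sqrt (2 / \<gamma>)) * sqrt (real k) * S"
      using \<open>0 \<le> S\<close> by (intro mult_right_mono) auto
    finally show ?thesis
      by (simp add: w_def s_def S_def)
  qed
qed

lemma sum_card_supporters_le_max_add:
  assumes "finite C" "card W \<le> k" "T \<subseteq> C - W" "card T = k - card W"
    and T_max: "\<And>T'. T' \<subseteq> C - W \<Longrightarrow> card T' = k - card W \<Longrightarrow>
      (\<Sum>c\<in>T'. card (supporters A n c)) \<le> (\<Sum>c\<in>T. card (supporters A n c))"
    and "R \<subseteq> C - W" "card R \<le> k"
    and bound: "\<And>c. c \<in> C - W \<Longrightarrow> real (card W) * real (card (supporters A n c)) \<le> B"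
    and "0 \<le> B"
  shows "(\<Sum>c\<in>R. real (card (supporters A n c))) \<le> (\<Sum>c\<in>T. real (card (supporters A n c))) + B"
proof (rule sum_le_max_sum_add[OF _ assms(3,4)])
  show "finite (C - W)"
    using \<open>finite C\<close> by simp
  show "(\<Sum>c\<in>T'. real (card (supporters A n c))) \<le> (\<Sum>c\<in>T. real (card (supporters A n c)))"
    if "T' \<subseteq> C - W" "card T' = k - card W" for T'
    using T_max[OF that] by (simp flip: of_nat_sum)
  show "card R \<le> k - card W + card W"
    using \<open>card R \<le> k\<close> \<open>card W \<le> k\<close> by simp
qed (use assms(6,9) bound in simp_all)

lemma opt_sw_le_AV_completion_add:
  assumes valid: "valid_instance C A n k" and "committee C k W"
    and "AV_completion C A n k W W'"
    and bound: "\<And>c. c \<in> C - W \<Longrightarrow> real (card W) * real (card (supporters A n c)) \<le> B"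
    and "0 \<le> B"
  shows "real (opt_sw C A n k) \<le> real (sw A n W') + B"
proof -
  define s where "s c = real (card (supporters A n c))" for c
  have "finite C"
    using valid by (simp add: valid_instance_def)
  have "W \<subseteq> C" "card W \<le> k"
    using \<open>committee C k W\<close> by (simp_all add: committee_def)
  have sw_eq: "real (sw A n S) = sum s S" if "S \<subseteq> C" for S
    using sw_eq_sum_card_supporters[OF finite_subset[OF that \<open>finite C\<close>]] by (simp add: s_def)
  obtain T where T: "T \<subseteq> C - W" "card T = k - card W" "W' = W \<union> T"
    and T_max: "\<And>T'. T' \<subseteq> C - W \<Longrightarrow> card T' = k - card W \<Longrightarrow>
      (\<Sum>c\<in>T'. card (supporters A n c)) \<le> (\<Sum>c\<in>T. card (supporters A n c))"
    using \<open>AV_completion C A n k W W'\<close> unfolding AV_completion_def by blast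
  obtain Q where "Q \<subseteq> C" "card Q = k" "opt_sw C A n k = sw A n Q"
    using opt_sw_attained[OF valid] by blast
  have "card (Q - W) \<le> k"
    using \<open>Q \<subseteq> C\<close> \<open>finite C\<close> \<open>card Q = k\<close> card_mono[of Q "Q - W"] by (auto intro: finite_subset)
  have "real (opt_sw C A n k) = sum s (Q \<inter> W) + sum s (Q - W)"
    using \<open>opt_sw C A n k = sw A n Q\<close> sw_eq[OF \<open>Q \<subseteq> C\<close>] \<open>Q \<subseteq> C\<close> \<open>finite C\<close>
    by (simp add: sum.Int_Diff finite_subset)
  also have "sum s (Q \<inter> W) \<le> sum s W"
    using \<open>W \<subseteq> C\<close> \<open>finite C\<close> by (intro sum_mono2) (auto simp: s_def intro: finite_subset)
  also have "sum s (Q - W) \<le> sum s T + B"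
    unfolding s_def using \<open>Q \<subseteq> C\<close> \<open>card (Q - W) \<le> k\<close>
    by (intro sum_card_supporters_le_max_add[OF \<open>finite C\<close> \<open>card W \<le> k\<close> T(1,2) T_max _ _ bound \<open>0 \<le> B\<close>])
      auto
  also have "sum s W + (sum s T + B) = sum s W' + B"
  proof -
    have "finite W" "finite T" "W \<inter> T = {}"
      using T(1) \<open>W \<subseteq> C\<close> \<open>finite C\<close> by (auto intro: finite_subset)
    then show ?thesis
      using T(3) by (simp add: sum.union_disjoint)
  qed
  also have "\<dots> = real (sw A n W') + B"
    using sw_eq[of W'] T(1,3) \<open>W \<subseteq> C\<close> by (metis Diff_subset le_sup_iff order_trans)
  finally show ?thesis
    by simp
qed

lemma util_ratio_ge:
  assumes "1 \<le> D" "real (opt_sw C A n k) \<le> D * real (sw A n W)"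
  shows "1 / D \<le> util_ratio C A n k W"
proof (cases "opt_sw C A n k = 0")
  case True
  then show ?thesis
    using assms(1) by (simp add: util_ratio_def)
next
  case False
  then show ?thesis
    using assms by (simp add: util_ratio_def field_simps)
qed

lemma sw_le_sw_AV_completion:
  assumes "valid_instance C A n k" "committee C k W" "AV_completion C A n k W W'"
  shows "sw A n W \<le> sw A n W'"
proof -
  obtain T where "T \<subseteq> C - W" "W' = W \<union> T"
    using assms(3) unfolding AV_completion_def by blast
  moreover have "finite C" "W \<subseteq> C"
    using assms(1,2) by (simp_all add: valid_instance_def committee_def)
  ultimately show ?thesis
    by (intro sw_mono) (auto intro: finite_subset)
qed

lemma util_ratio_AV_completion_ge:
  assumes valid: "valid_instance C A n k"
    and W: "committee C k W" "affordable C A n k W" "f_representative f C A n k W"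
    and growth: "0 < \<gamma>" "1 \<le> L" "\<forall>l\<ge>L. \<gamma> * real l \<le> f l"
    and W': "AV_completion C A n k W W'"
  shows "1 / ((1 + real L + sqrt (2 / \<gamma>)) * sqrt (real k)) \<le> util_ratio C A n k W'"
proof -
  define K where "K = real L + sqrt (2 / \<gamma>)"
  define S where "S = real (sw A n W')"
  have "0 \<le> K" "1 \<le> sqrt (real k)" "real (sw A n W) \<le> S"
    using valid sw_le_sw_AV_completion[OF valid W(1) W'] \<open>0 < \<gamma>\<close>
    by (simp_all add: valid_instance_def K_def S_def)
  have "real (card W) * real (card (supporters A n c)) \<le> K * sqrt (real k) * S"
    if "c \<in> C - W" for c
  proof -
    note card_mul_card_supporters_le[OF valid W growth that]
    also have "(real L + sqrt (2 / \<gamma>)) * sqrt (real k) * real (sw A n W) \<le> K * sqrt (real k) * S"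
      using \<open>real (sw A n W) \<le> S\<close> \<open>0 \<le> K\<close> by (simp add: K_def mult_left_mono)
    finally show ?thesis .
  qed
  then have "real (opt_sw C A n k) \<le> S + K * sqrt (real k) * S"
    using \<open>0 \<le> K\<close> opt_sw_le_AV_completion_add[OF valid W(1) W'] by (simp add: S_def)
  also have "\<dots> \<le> ((1 + K) * sqrt (real k)) * S"
    using \<open>1 \<le> sqrt (real k)\<close> \<open>0 \<le> K\<close> mult_right_mono[of 1 "sqrt (real k)" S]
    by (simp add: S_def algebra_simps)
  finally have "real (opt_sw C A n k) \<le> ((1 + K) * sqrt (real k)) * real (sw A n W')"
    by (simp add: S_def)
  moreover have "1 \<le> (1 + K) * sqrt (real k)"
    using mult_mono[of 1 "1 + K" 1 "sqrt (real k)"] \<open>0 \<le> K\<close> \<open>1 \<le> sqrt (real k)\<close> by simp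
  ultimately show ?thesis
    using util_ratio_ge by (simp add: K_def add.assoc)
qed

theorem corollary1:
  fixes f :: "nat \<Rightarrow> real"
  assumes "\<exists>\<gamma>>0. \<exists>l0. \<forall>l\<ge>l0. f l \<ge> \<gamma> * real l"
  shows "\<exists>\<delta>>0. \<forall>C A n k W W'.
           valid_instance C A n k \<and> committee C k W \<and> affordable C A n k W
           \<and> f_representative f C A n k W \<and> AV_completion C A n k W W'
           \<longrightarrow> util_ratio C A n k W' \<ge> \<delta> / sqrt (real k)"
proof -
  obtain \<gamma> l0 where "0 < \<gamma>" and "\<forall>l\<ge>l0. \<gamma> * real l \<le> f l"
    using assms by blast
  then have growth: "0 < \<gamma>" "1 \<le> max l0 1" "\<forall>l\<ge>max l0 1. \<gamma> * real l \<le> f l"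
    by simp_all
  define \<delta> where "\<delta> = 1 / (1 + real (max l0 1) + sqrt (2 / \<gamma>))"
  have "0 < \<delta>"
    using \<open>0 < \<gamma>\<close> by (simp add: \<delta>_def add_pos_nonneg)
  moreover have "\<delta> / sqrt (real k) \<le> util_ratio C A n k W'"
    if "valid_instance C A n k" "committee C k W" "affordable C A n k W"
      "f_representative f C A n k W" "AV_completion C A n k W W'" for C A n k W W'
    using util_ratio_AV_completion_ge[OF that(1-4) growth that(5)] by (simp add: \<delta>_def)
  ultimately show ?thesis
    by blast
qed

end
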